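(* Let $V$ be a finite set of voters, $A$ a finite set of alternatives, and $F:\mathcal{P}(V,A)\to 2^A\setminus\{\emptyset\}$ a social choice correspondence. The following two conditions are equivalent: (1) $F$ is onto with respect to singletons, is strategy-proof for optimists (SPO), and is strategy-proof for pessimists (SPP). (2) $F$ is onto with respect to singletons, and there exist, for each voter $i\in V$, functions $p_i:\mathcal{P}(V,A)\times A\times 2^A\to[0,1]$ such that (a) for every profile $P$ and every nonempty $X\subseteq A$, $\sum_{x\in X}p_i(P,x,X)=1$; (b) for every profile $P$, every nonempty $X\subseteq A$ and every $a\in X$, $p_i(P,a,X)>0$ whenever $a=\mathrm{best}(P_i,X)$ or $a=\mathrm{worst}(P_i,X)$, where $P_i$ is voter $i$'s ballot in $P$; (c) for every voter $i$, every profile $P=P_iP_{-i}$, every linear order $P_i'$ over $A$, and every utility function $u_i:A\to\mathbb{R}$ consistent with $P_i$ (i.e. $u_i(a)>u_i(b)$ whenever $a\succ_i b$ in $P_i$), $$\sum_{x\in F(P_iP_{-i})}p_i\big(P_iP_{-i},x,F(P_iP_{-i})\big)\,u_i(x)\;\geq\;\sum_{x\in F(P_i'P_{-i})}p_i\big(P_iP_{-i},x,F(P_i'P_{-i})\big)\,u_i(x).$$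
   Context: $V$ is a finite set of voters and $A$ a finite set of alternatives. A profile $P$ assigns to every voter $i\in V$ a linear order $P_i$ over $A$ (a ballot); $\succ_i$ denotes the strict order of $P_i$ and $\succeq_i$ its reflexive version. $\mathcal{P}(V,A)$ is the set of all profiles. $P_{-i}$ denotes the ballots of all voters other than $i$, so $P=P_iP_{-i}$, and $P_i'P_{-i}$ is the profile obtained from $P$ by replacing $P_i$ with the linear order $P_i'$. A social choice correspondence is a map $F:\mathcal{P}(V,A)\to 2^A\setminus\{\emptyset\}$. $F$ is onto with respect to singletons if for every $a\in A$ there is a profile $P$ with $F(P)=\{a\}$. For nonempty $W\subseteq A$, $\mathrm{best}(P_i,W)$ and $\mathrm{worst}(P_i,W)$ denote the $P_i$-best and $P_i$-worst elements of $W$. Define weak orders on nonempty subsets of $A$: $X\succeq_i^O Y$ iff $\mathrm{best}(P_i,X)\succeq_i\mathrm{best}(P_i,Y)$; $X\succeq_i^P Y$ iff $\mathrm{worst}(P_i,X)\succeq_i\mathrm{worst}(P_i,Y)$. $F$ is strategy-proof for optimists (SPO) if for every voter $i$, every profile $P_iP_{-i}$ and every linear order $P_i'$, $F(P_iP_{-i})\succeq_i^O F(P_i'P_{-i})$ (with $\succeq_i$ taken from the sincere ballot $P_i$). $F$ is strategy-proof for pessimists (SPP) if for every voter $i$, every profile $P_iP_{-i}$ and every linear order $P_i'$, $F(P_iP_{-i})\succeq_i^P F(P_i'P_{-i})$. *)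

theory Defs
  imports Complex_Main
begin

text \<open>A ballot is a linear order on the alternatives A, represented as a relation R,
  where (a, b) \<in> R means "a is weakly preferred to b" (reflexive version).
  A profile assigns a ballot to every voter in V; outside V it is fixed to the empty
  relation, so that profiles are exactly the elements of P(V,A).\<close>

definition profiles :: "'v set \<Rightarrow> 'a set \<Rightarrow> ('v \<Rightarrow> 'a rel) set" where
  "profiles V A = {P. (\<forall>i\<in>V. linear_order_on A (P i)) \<and> (\<forall>i. i \<notin> V \<longrightarrow> P i = {})}"

definition strict_pref :: "'a rel \<Rightarrow> 'a \<Rightarrow> 'a \<Rightarrow> bool" where
  "strict_pref R a b \<longleftrightarrow> (a, b) \<in> R \<and> a \<noteq> b"

definition best :: "'a rel \<Rightarrow> 'a set \<Rightarrow> 'a" where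
  "best R X = (THE x. x \<in> X \<and> (\<forall>y\<in>X. (x, y) \<in> R))"

definition worst :: "'a rel \<Rightarrow> 'a set \<Rightarrow> 'a" where
  "worst R X = (THE x. x \<in> X \<and> (\<forall>y\<in>X. (y, x) \<in> R))"

definition is_scc :: "'v set \<Rightarrow> 'a set \<Rightarrow> (('v \<Rightarrow> 'a rel) \<Rightarrow> 'a set) \<Rightarrow> bool" where
  "is_scc V A F \<longleftrightarrow> (\<forall>P\<in>profiles V A. F P \<noteq> {} \<and> F P \<subseteq> A)"

definition onto_singletons :: "'v set \<Rightarrow> 'a set \<Rightarrow> (('v \<Rightarrow> 'a rel) \<Rightarrow> 'a set) \<Rightarrow> bool" where
  "onto_singletons V A F \<longleftrightarrow> (\<forall>a\<in>A. \<exists>P\<in>profiles V A. F P = {a})"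

definition SPO :: "'v set \<Rightarrow> 'a set \<Rightarrow> (('v \<Rightarrow> 'a rel) \<Rightarrow> 'a set) \<Rightarrow> bool" where
  "SPO V A F \<longleftrightarrow> (\<forall>i\<in>V. \<forall>P\<in>profiles V A. \<forall>R. linear_order_on A R \<longrightarrow>
      (best (P i) (F P), best (P i) (F (P(i := R)))) \<in> P i)"

definition SPP :: "'v set \<Rightarrow> 'a set \<Rightarrow> (('v \<Rightarrow> 'a rel) \<Rightarrow> 'a set) \<Rightarrow> bool" where
  "SPP V A F \<longleftrightarrow> (\<forall>i\<in>V. \<forall>P\<in>profiles V A. \<forall>R. linear_order_on A R \<longrightarrow>
      (worst (P i) (F P), worst (P i) (F (P(i := R)))) \<in> P i)"

definition consistent_utility :: "'a set \<Rightarrow> 'a rel \<Rightarrow> ('a \<Rightarrow> real) \<Rightarrow> bool" where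
  "consistent_utility A R u \<longleftrightarrow> (\<forall>a\<in>A. \<forall>b\<in>A. strict_pref R a b \<longrightarrow> u a > u b)"

end

theory Submission imports Defs begin

text \<open>If F is SPO and SPP, let every voter evaluate a set by the lottery putting probability 1/2
  on its best and 1/2 on its worst element: expected utility then depends only on these two
  elements, and SPO and SPP give (c). Conversely, given lotteries with (a)-(c), a manipulation that
  improves the best element is refuted by the utility "rank plus a jump M on the alternatives weakly
  above the new best element": the manipulated outcome is worth at least q M, where q > 0 is the
  probability of its best element, while the sincere outcome is worth at most card A. For the worst
  element put the jump on everything strictly above the sincere worst element: the manipulated
  outcome is worth at least M, the sincere one at most card A + M - q M, with q the probability of
  the sincere worst element. Taking q M = card A + 1 contradicts (c) in both cases.\<close>

lemma linear_order_onD: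
  assumes "linear_order_on A R"
  shows "\<And>x. x \<in> A \<Longrightarrow> (x, x) \<in> R" "trans R" "antisym R"
    "\<And>x y. x \<in> A \<Longrightarrow> y \<in> A \<Longrightarrow> x \<noteq> y \<Longrightarrow> (x, y) \<in> R \<or> (y, x) \<in> R"
  using assms
  by (auto simp: linear_order_on_def partial_order_on_def preorder_on_def refl_on_def total_on_def)

lemma linear_order_on_has_greatest:
  assumes R: "linear_order_on A R" and "finite X" "X \<noteq> {}" "X \<subseteq> A"
  shows "\<exists>x\<in>X. \<forall>y\<in>X. (x, y) \<in> R"
  using assms(2-4)
proof (induction X rule: finite_ne_induct)
  case (singleton x)
  then show ?case using linear_order_onD(1)[OF R] by auto
next
  case (insert x X)
  then obtain m where m: "m \<in> X" "\<forall>y\<in>X. (m, y) \<in> R" by auto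
  show ?case
  proof (cases "(x, m) \<in> R")
    case True
    then show ?thesis using m linear_order_onD(1,2)[OF R] insert.prems by (auto dest: transD)
  next
    case False
    then have "(m, x) \<in> R" using linear_order_onD(4)[OF R, of x m] insert m by auto
    then show ?thesis using m by auto
  qed
qed

lemma best_greatest:
  assumes R: "linear_order_on A R" and "finite X" "X \<noteq> {}" "X \<subseteq> A"
  shows "best R X \<in> X" "\<forall>y\<in>X. (best R X, y) \<in> R"
proof -
  obtain x where x: "x \<in> X" "\<forall>y\<in>X. (x, y) \<in> R"
    using linear_order_on_has_greatest[OF assms] by blast
  have "best R X = x"
    unfolding best_def
  proof (rule the_equality)
    fix z assume "z \<in> X \<and> (\<forall>y\<in>X. (z, y) \<in> R)"
    with x have "(z, x) \<in> R" "(x, z) \<in> R" by auto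
    then show "z = x" using antisymD[OF linear_order_onD(3)[OF R]] by blast
  qed (use x in auto)
  with x show "best R X \<in> X" "\<forall>y\<in>X. (best R X, y) \<in> R" by simp_all
qed

lemma worst_eq_best_converse: "worst R X = best (R\<inverse>) X"
  unfolding worst_def best_def by simp

lemma worst_least:
  assumes "linear_order_on A R" and "finite X" "X \<noteq> {}" "X \<subseteq> A"
  shows "worst R X \<in> X" "\<forall>y\<in>X. (y, worst R X) \<in> R"
  using best_greatest[of A "R\<inverse>" X] assms by (simp_all add: worst_eq_best_converse)

definition pref_rank :: "'a set \<Rightarrow> 'a rel \<Rightarrow> 'a \<Rightarrow> real" where
  "pref_rank A R x = real (card {y\<in>A. (x, y) \<in> R})"

lemma pref_rank_nonneg: "0 \<le> pref_rank A R x"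
  unfolding pref_rank_def by simp

lemma pref_rank_le_card: "finite A \<Longrightarrow> pref_rank A R x \<le> real (card A)"
  unfolding pref_rank_def by (auto intro: card_mono)

lemma consistent_utility_pref_rank:
  assumes R: "linear_order_on A R" and "finite A"
  shows "consistent_utility A R (pref_rank A R)"
  unfolding consistent_utility_def
proof (intro ballI impI)
  fix a b assume "a \<in> A" "b \<in> A" "strict_pref R a b"
  then have "{y\<in>A. (b, y) \<in> R} \<subset> {y\<in>A. (a, y) \<in> R}"
    using linear_order_onD(1-3)[OF R] unfolding strict_pref_def
    by (auto dest: transD antisymD)
  then show "pref_rank A R a > pref_rank A R b"
    unfolding pref_rank_def using \<open>finite A\<close> by (simp add: psubset_card_mono)
qed

lemma consistent_utility_add_upper_step:
  assumes "consistent_utility A R u" and "0 \<le> M"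
    and upper: "\<And>x y. x \<in> A \<Longrightarrow> y \<in> U \<Longrightarrow> (x, y) \<in> R \<Longrightarrow> x \<in> U"
  shows "consistent_utility A R (\<lambda>x. u x + (if x \<in> U then M else 0))"
  unfolding consistent_utility_def
proof (intro ballI impI)
  fix a b assume ab: "a \<in> A" "b \<in> A" "strict_pref R a b"
  then have "u b < u a" "b \<in> U \<longrightarrow> a \<in> U"
    using assms(1) upper[of a b] unfolding consistent_utility_def strict_pref_def by auto
  then show "u b + (if b \<in> U then M else 0) < u a + (if a \<in> U then M else 0)"
    using \<open>0 \<le> M\<close> by auto
qed

lemma consistent_utility_mono:
  assumes "consistent_utility A R u" "a \<in> A" "b \<in> A" "(a, b) \<in> R"
  shows "u b \<le> u a"
  using assms unfolding consistent_utility_def strict_pref_def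
  by (cases "a = b") (auto intro: less_imp_le)

definition lottery :: "'a set \<Rightarrow> ('a \<Rightarrow> real) \<Rightarrow> bool" where
  "lottery X l \<longleftrightarrow> (\<forall>x\<in>X. 0 \<le> l x) \<and> sum l X = 1"

lemma expectation_le_point:
  fixes l u :: "'a \<Rightarrow> real"
  assumes "finite X" "a \<in> X" "lottery X l"
    and "\<forall>x\<in>X. u x \<le> c" "u a \<le> c - d"
  shows "(\<Sum>x\<in>X. l x * u x) \<le> c - l a * d"
proof -
  have "(\<Sum>x\<in>X. l x * u x) \<le> (\<Sum>x\<in>X. l x * c - (if x = a then l x * d else 0))"
  proof (rule sum_mono)
    fix x assume "x \<in> X"
    then have "u x \<le> c - (if x = a then d else 0)" "0 \<le> l x"
      using assms(3-5) unfolding lottery_def by auto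
    then show "l x * u x \<le> l x * c - (if x = a then l x * d else 0)"
      by (auto simp: right_diff_distrib dest: mult_left_mono)
  qed
  also have "\<dots> = c - l a * d"
    using assms(1-3) unfolding lottery_def
    by (simp add: sum_subtractf sum_distrib_right[symmetric])
  finally show ?thesis .
qed

lemma expectation_ge_point:
  fixes l u :: "'a \<Rightarrow> real"
  assumes "finite X" "a \<in> X" "lottery X l"
    and "\<forall>x\<in>X. c \<le> u x" "c + d \<le> u a"
  shows "c + l a * d \<le> (\<Sum>x\<in>X. l x * u x)"
  using expectation_le_point[OF assms(1-3), of "\<lambda>x. - u x" "- c" d] assms(4,5)
  by (simp add: sum_negf)

lemma expectation_le:
  fixes l u :: "'a \<Rightarrow> real"
  assumes "finite X" "lottery X l" "\<forall>x\<in>X. u x \<le> c"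
  shows "(\<Sum>x\<in>X. l x * u x) \<le> c"
proof -
  have "(\<Sum>x\<in>X. l x * u x) \<le> (\<Sum>x\<in>X. l x * c)"
    using assms(2,3) unfolding lottery_def by (intro sum_mono mult_left_mono) auto
  then show ?thesis using assms(2) unfolding lottery_def by (simp add: sum_distrib_right[symmetric])
qed

lemma expectation_ge:
  fixes l u :: "'a \<Rightarrow> real"
  assumes "finite X" "lottery X l" "\<forall>x\<in>X. c \<le> u x"
  shows "c \<le> (\<Sum>x\<in>X. l x * u x)"
  using expectation_le[OF assms(1,2), of "\<lambda>x. - u x" "- c"] assms(3) by (simp add: sum_negf)

definition best_worst_lottery :: "'a rel \<Rightarrow> 'a set \<Rightarrow> 'a \<Rightarrow> real" where
  "best_worst_lottery R X x =
     ((if x = best R X then 1 else 0) + (if x = worst R X then 1 else 0)) / 2"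

lemma expectation_best_worst_lottery:
  fixes u :: "'a \<Rightarrow> real"
  assumes "finite X" "best R X \<in> X" "worst R X \<in> X"
  shows "(\<Sum>x\<in>X. best_worst_lottery R X x * u x) = (u (best R X) + u (worst R X)) / 2"
proof -
  have "(\<Sum>x\<in>X. best_worst_lottery R X x * u x)
      = (\<Sum>x\<in>X. if x = best R X then u x / 2 else 0) + (\<Sum>x\<in>X. if x = worst R X then u x / 2 else 0)"
    unfolding best_worst_lottery_def sum.distrib[symmetric] by (rule sum.cong) auto
  then show ?thesis using assms by (simp add: add_divide_distrib)
qed

lemma lottery_best_worst_lottery:
  assumes "finite X" "best R X \<in> X" "worst R X \<in> X"
  shows "lottery X (best_worst_lottery R X)"
  using expectation_best_worst_lottery[OF assms, of "\<lambda>_. 1"]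
  unfolding lottery_def by (simp add: best_worst_lottery_def)

context
  fixes A :: "'a set" and Q :: "'a rel" and X Y :: "'a set" and l m :: "'a \<Rightarrow> real"
  assumes Q: "linear_order_on A Q" and A: "finite A"
    and X: "X \<subseteq> A" "X \<noteq> {}" and Y: "Y \<subseteq> A" "Y \<noteq> {}"
    and lotteries: "lottery X l" "lottery Y m"
    and dominates: "\<And>u. consistent_utility A Q u \<Longrightarrow> (\<Sum>y\<in>Y. m y * u y) \<le> (\<Sum>x\<in>X. l x * u x)"
begin

private lemma finite_XY: "finite X" "finite Y"
  using X Y A by (auto intro: finite_subset)

private lemma threshold_utility_dominates:
  assumes "0 \<le> M" "\<And>x y. x \<in> A \<Longrightarrow> y \<in> U \<Longrightarrow> (x, y) \<in> Q \<Longrightarrow> x \<in> U"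
  defines "u \<equiv> \<lambda>x. pref_rank A Q x + (if x \<in> U then M else 0)"
  shows "(\<Sum>y\<in>Y. m y * u y) \<le> (\<Sum>x\<in>X. l x * u x)"
  unfolding u_def
  by (rule dominates, rule consistent_utility_add_upper_step[OF
        consistent_utility_pref_rank[OF Q A] assms(1,2)])

lemma best_dominance:
  assumes "0 < m (best Q Y)"
  shows "(best Q X, best Q Y) \<in> Q"
proof (rule ccontr)
  define b b' where "b = best Q X" and "b' = best Q Y"
  assume "(best Q X, best Q Y) \<notin> Q"
  then have not_above: "(b, b') \<notin> Q" by (simp add: b_def b'_def)
  have b: "b \<in> X" "\<forall>x\<in>X. (b, x) \<in> Q" and b': "b' \<in> Y" "b' \<in> A"
    using best_greatest[OF Q finite_XY(1) X(2,1)] best_greatest[OF Q finite_XY(2) Y(2,1)] Y(1)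
    unfolding b_def b'_def by auto
  define M where "M = (real (card A) + 1) / m b'"
  have M: "0 \<le> M" "m b' * M = real (card A) + 1"
    using assms unfolding M_def b'_def by auto
  define U where "U = {x. (x, b') \<in> Q}"
  define u where "u x = pref_rank A Q x + (if x \<in> U then M else 0)" for x
  have "\<forall>x\<in>X. x \<notin> U"
    using b not_above transD[OF linear_order_onD(2)[OF Q]] unfolding U_def by blast
  then have "(\<Sum>x\<in>X. l x * u x) \<le> real (card A)"
    using pref_rank_le_card[OF A]
    by (intro expectation_le[OF finite_XY(1) lotteries(1)]) (auto simp: u_def)
  moreover have "0 + m b' * M \<le> (\<Sum>y\<in>Y. m y * u y)"
    using pref_rank_nonneg pref_rank_le_card[OF A] linear_order_onD(1)[OF Q] b' M(1)
    by (intro expectation_ge_point[OF finite_XY(2) b'(1) lotteries(2)])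
      (auto simp: u_def U_def pref_rank_nonneg add_increasing2)
  moreover have "(\<Sum>y\<in>Y. m y * u y) \<le> (\<Sum>x\<in>X. l x * u x)"
    unfolding u_def using M(1) linear_order_onD(2)[OF Q] unfolding U_def
    by (intro threshold_utility_dominates) (auto dest: transD)
  ultimately show False using M(2) by linarith
qed

lemma worst_dominance:
  assumes "0 < l (worst Q X)"
  shows "(worst Q X, worst Q Y) \<in> Q"
proof (rule ccontr)
  define w w' where "w = worst Q X" and "w' = worst Q Y"
  assume "(worst Q X, worst Q Y) \<notin> Q"
  then have not_below: "(w, w') \<notin> Q" by (simp add: w_def w'_def)
  have w: "w \<in> X" "w \<in> A" and w': "w' \<in> Y" "\<forall>y\<in>Y. (y, w') \<in> Q"
    using worst_least[OF Q finite_XY(1) X(2,1)] worst_least[OF Q finite_XY(2) Y(2,1)] X(1)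
    unfolding w_def w'_def by auto
  define M where "M = (real (card A) + 1) / l w"
  have M: "0 \<le> M" "l w * M = real (card A) + 1"
    using assms unfolding M_def w_def by auto
  define U where "U = {x. (w, x) \<notin> Q}"
  define u where "u x = pref_rank A Q x + (if x \<in> U then M else 0)" for x
  have "\<forall>y\<in>Y. y \<in> U"
    using w' not_below transD[OF linear_order_onD(2)[OF Q]] unfolding U_def by blast
  then have "M \<le> (\<Sum>y\<in>Y. m y * u y)"
    by (intro expectation_ge[OF finite_XY(2) lotteries(2)]) (auto simp: u_def pref_rank_nonneg)
  moreover have "(\<Sum>x\<in>X. l x * u x) \<le> (real (card A) + M) - l w * M"
    using pref_rank_nonneg pref_rank_le_card[OF A] linear_order_onD(1)[OF Q] w M(1)
    by (intro expectation_le_point[OF finite_XY(1) w(1) lotteries(1)])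
      (auto simp: u_def U_def pref_rank_nonneg add_increasing2)
  moreover have "(\<Sum>y\<in>Y. m y * u y) \<le> (\<Sum>x\<in>X. l x * u x)"
    unfolding u_def using M(1) linear_order_onD(2)[OF Q] unfolding U_def
    by (intro threshold_utility_dominates) (auto dest: transD)
  ultimately show False using M(2) by linarith
qed

end

lemma profiles_linear_order: "P \<in> profiles V A \<Longrightarrow> i \<in> V \<Longrightarrow> linear_order_on A (P i)"
  unfolding profiles_def by auto

lemma profiles_update:
  "P \<in> profiles V A \<Longrightarrow> i \<in> V \<Longrightarrow> linear_order_on A R \<Longrightarrow> P(i := R) \<in> profiles V A"
  unfolding profiles_def by auto

lemma is_sccD:
  assumes "is_scc V A F" "P \<in> profiles V A"
  shows "F P \<noteq> {}" "F P \<subseteq> A"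
  using assms unfolding is_scc_def by blast+

text \<open>Conditions (a)-(c) of the theorem: p i P \<cdot> X is the lottery over X with which voter i,
  whose sincere ballot is P i, evaluates the outcome X.\<close>

definition eu_rationalizes ::
  "'v set \<Rightarrow> 'a set \<Rightarrow> (('v \<Rightarrow> 'a rel) \<Rightarrow> 'a set) \<Rightarrow>
    ('v \<Rightarrow> ('v \<Rightarrow> 'a rel) \<Rightarrow> 'a \<Rightarrow> 'a set \<Rightarrow> real) \<Rightarrow> bool"
where
  "eu_rationalizes V A F p \<longleftrightarrow>
     (\<forall>i\<in>V. \<forall>P\<in>profiles V A. \<forall>x\<in>A. \<forall>X. X \<subseteq> A \<longrightarrow> 0 \<le> p i P x X \<and> p i P x X \<le> 1) \<and>
     (\<forall>i\<in>V. \<forall>P\<in>profiles V A. \<forall>X. X \<subseteq> A \<and> X \<noteq> {} \<longrightarrow> (\<Sum>x\<in>X. p i P x X) = 1) \<and>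
     (\<forall>i\<in>V. \<forall>P\<in>profiles V A. \<forall>X. X \<subseteq> A \<and> X \<noteq> {} \<longrightarrow>
        (\<forall>a\<in>X. (a = best (P i) X \<or> a = worst (P i) X) \<longrightarrow> p i P a X > 0)) \<and>
     (\<forall>i\<in>V. \<forall>P\<in>profiles V A. \<forall>R u. linear_order_on A R \<and> consistent_utility A (P i) u \<longrightarrow>
        (\<Sum>x\<in>F P. p i P x (F P) * u x) \<ge>
        (\<Sum>x\<in>F (P(i := R)). p i P x (F (P(i := R))) * u x))"

lemma SPO_SPP_imp_eu_rationalizes:
  fixes V :: "'v set" and A :: "'a set"
  assumes A: "finite A" and F: "is_scc V A F" and "SPO V A F" "SPP V A F"
  shows "eu_rationalizes V A F (\<lambda>i P x X. best_worst_lottery (P i) X x)"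
proof -
  have best_worst_in: "best (P i) X \<in> X" "worst (P i) X \<in> X" "finite X"
    if "i \<in> V" "P \<in> profiles V A" "X \<subseteq> A" "X \<noteq> {}" for i P X
  proof -
    have "finite X" using finite_subset[OF \<open>X \<subseteq> A\<close> A] .
    with profiles_linear_order[OF that(2,1)] that(3,4)
    show "best (P i) X \<in> X" "worst (P i) X \<in> X" "finite X"
      by (simp_all add: best_greatest(1) worst_least(1))
  qed
  have expectation_mono:
    "(\<Sum>x\<in>F (P(i := R)). best_worst_lottery (P i) (F (P(i := R))) x * u x)
       \<le> (\<Sum>x\<in>F P. best_worst_lottery (P i) (F P) x * u x)"
    if i: "i \<in> V" and P: "P \<in> profiles V A" and R: "linear_order_on A R"
      and u: "consistent_utility A (P i) u" for i P R u
  proof -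
    define P' where "P' = P(i := R)"
    have P': "P' \<in> profiles V A" using profiles_update[OF P i R] by (simp add: P'_def)
    note in_FP = best_worst_in[OF i P is_sccD(2,1)[OF F P]]
    note in_FP' = best_worst_in[OF i P is_sccD(2,1)[OF F P']]
    have FP_A: "F P \<subseteq> A" "F P' \<subseteq> A" using is_sccD(2)[OF F P] is_sccD(2)[OF F P'] .
    have "u (best (P i) (F P')) \<le> u (best (P i) (F P))"
      using \<open>SPO V A F\<close>[unfolded SPO_def, rule_format, OF i P R, folded P'_def]
        consistent_utility_mono[OF u] in_FP(1) in_FP'(1) FP_A by blast
    moreover have "u (worst (P i) (F P')) \<le> u (worst (P i) (F P))"
      using \<open>SPP V A F\<close>[unfolded SPP_def, rule_format, OF i P R, folded P'_def]
        consistent_utility_mono[OF u] in_FP(2) in_FP'(2) FP_A by blast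
    ultimately show ?thesis
      unfolding P'_def[symmetric] expectation_best_worst_lottery[OF in_FP(3,1,2)]
        expectation_best_worst_lottery[OF in_FP'(3,1,2)]
      by (intro divide_right_mono add_mono) simp_all
  qed
  show ?thesis
    unfolding eu_rationalizes_def
  proof (intro conjI ballI allI impI)
    fix i :: 'v and P :: "'v \<Rightarrow> 'a rel" and x X
    show "0 \<le> best_worst_lottery (P i) X x" "best_worst_lottery (P i) X x \<le> 1"
      by (simp_all add: best_worst_lottery_def)
  next
    fix i P X assume "i \<in> V" "P \<in> profiles V A" "X \<subseteq> A \<and> X \<noteq> {}"
    then have "lottery X (best_worst_lottery (P i) X)"
      by (intro lottery_best_worst_lottery best_worst_in) auto
    then show "(\<Sum>x\<in>X. best_worst_lottery (P i) X x) = 1"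
      unfolding lottery_def by simp
  next
    fix i :: 'v and P :: "'v \<Rightarrow> 'a rel" and X a assume "a = best (P i) X \<or> a = worst (P i) X"
    then show "0 < best_worst_lottery (P i) X a"
      by (auto simp: best_worst_lottery_def)
  next
    fix i P R u
    assume "i \<in> V" "P \<in> profiles V A" "linear_order_on A R \<and> consistent_utility A (P i) u"
    then show "(\<Sum>x\<in>F (P(i := R)). best_worst_lottery (P i) (F (P(i := R))) x * u x)
       \<le> (\<Sum>x\<in>F P. best_worst_lottery (P i) (F P) x * u x)"
      using expectation_mono by blast
  qed
qed

lemma eu_rationalizes_lottery:
  "eu_rationalizes V A F p \<Longrightarrow> i \<in> V \<Longrightarrow> P \<in> profiles V A \<Longrightarrow> X \<subseteq> A \<Longrightarrow> X \<noteq> {}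
    \<Longrightarrow> lottery X (\<lambda>x. p i P x X)"
  unfolding eu_rationalizes_def lottery_def by (meson subsetD)

lemma eu_rationalizes_positive:
  assumes "eu_rationalizes V A F p" "i \<in> V" "P \<in> profiles V A" "X \<subseteq> A" "X \<noteq> {}"
    and "a = best (P i) X \<or> a = worst (P i) X" "a \<in> X"
  shows "0 < p i P a X"
  using assms(1)[unfolded eu_rationalizes_def, THEN conjunct2, THEN conjunct2, THEN conjunct1,
      rule_format, OF assms(2,3) conjI[OF assms(4,5)] assms(7,6)] .

lemma eu_rationalizes_dominates:
  assumes "eu_rationalizes V A F p" "i \<in> V" "P \<in> profiles V A" "linear_order_on A R"
    and "consistent_utility A (P i) u"
  shows "(\<Sum>x\<in>F (P(i := R)). p i P x (F (P(i := R))) * u x)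
    \<le> (\<Sum>x\<in>F P. p i P x (F P) * u x)"
  using assms(1)[unfolded eu_rationalizes_def, THEN conjunct2, THEN conjunct2, THEN conjunct2,
      rule_format, OF assms(2,3) conjI[OF assms(4,5)]] .

lemma eu_rationalizes_imp_SPO:
  assumes A: "finite A" and F: "is_scc V A F" and p: "eu_rationalizes V A F p"
  shows "SPO V A F"
  unfolding SPO_def
proof (intro ballI allI impI)
  fix i P R assume i: "i \<in> V" and P: "P \<in> profiles V A" and R: "linear_order_on A R"
  define P' where "P' = P(i := R)"
  have P': "P' \<in> profiles V A" using profiles_update[OF P i R] by (simp add: P'_def)
  have Q: "linear_order_on A (P i)" using profiles_linear_order[OF P i] .
  have "best (P i) (F P') \<in> F P'"
    using best_greatest(1)[OF Q finite_subset[OF is_sccD(2)[OF F P'] A] is_sccD(1,2)[OF F P']] .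
  then have positive: "0 < p i P (best (P i) (F P')) (F P')"
    by (intro eu_rationalizes_positive[OF p i P is_sccD(2,1)[OF F P']]) simp_all
  show "(best (P i) (F P), best (P i) (F (P(i := R)))) \<in> P i"
    unfolding P'_def[symmetric]
    using eu_rationalizes_dominates[OF p i P R, folded P'_def] positive
    by (rule best_dominance[OF Q A is_sccD(2,1)[OF F P] is_sccD(2,1)[OF F P']
        eu_rationalizes_lottery[OF p i P is_sccD(2,1)[OF F P]]
        eu_rationalizes_lottery[OF p i P is_sccD(2,1)[OF F P']]])
qed

lemma eu_rationalizes_imp_SPP:
  assumes A: "finite A" and F: "is_scc V A F" and p: "eu_rationalizes V A F p"
  shows "SPP V A F"
  unfolding SPP_def
proof (intro ballI allI impI)
  fix i P R assume i: "i \<in> V" and P: "P \<in> profiles V A" and R: "linear_order_on A R"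
  define P' where "P' = P(i := R)"
  have P': "P' \<in> profiles V A" using profiles_update[OF P i R] by (simp add: P'_def)
  have Q: "linear_order_on A (P i)" using profiles_linear_order[OF P i] .
  have "worst (P i) (F P) \<in> F P"
    using worst_least(1)[OF Q finite_subset[OF is_sccD(2)[OF F P] A] is_sccD(1,2)[OF F P]] .
  then have positive: "0 < p i P (worst (P i) (F P)) (F P)"
    by (intro eu_rationalizes_positive[OF p i P is_sccD(2,1)[OF F P]]) simp_all
  show "(worst (P i) (F P), worst (P i) (F (P(i := R)))) \<in> P i"
    unfolding P'_def[symmetric]
    using eu_rationalizes_dominates[OF p i P R, folded P'_def] positive
    by (rule worst_dominance[OF Q A is_sccD(2,1)[OF F P] is_sccD(2,1)[OF F P']
        eu_rationalizes_lottery[OF p i P is_sccD(2,1)[OF F P]]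
        eu_rationalizes_lottery[OF p i P is_sccD(2,1)[OF F P']]])
qed

lemma SPO_SPP_iff_eu_rationalizable:
  assumes "finite A" "is_scc V A F"
  shows "SPO V A F \<and> SPP V A F \<longleftrightarrow> (\<exists>p. eu_rationalizes V A F p)"
proof
  assume "SPO V A F \<and> SPP V A F"
  then show "\<exists>p. eu_rationalizes V A F p"
    using SPO_SPP_imp_eu_rationalizes[OF assms] by blast
qed (use eu_rationalizes_imp_SPO[OF assms] eu_rationalizes_imp_SPP[OF assms] in blast)

theorem mainTheorem1:
  fixes V :: "'v set" and A :: "'a set" and F :: "('v \<Rightarrow> 'a rel) \<Rightarrow> 'a set"
  assumes "finite V" and "finite A" and "is_scc V A F"
  shows "(onto_singletons V A F \<and> SPO V A F \<and> SPP V A F) \<longleftrightarrow>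
    (onto_singletons V A F \<and>
     (\<exists>p :: 'v \<Rightarrow> ('v \<Rightarrow> 'a rel) \<Rightarrow> 'a \<Rightarrow> 'a set \<Rightarrow> real.
        (\<forall>i\<in>V. \<forall>P\<in>profiles V A. \<forall>x\<in>A. \<forall>X. X \<subseteq> A \<longrightarrow> 0 \<le> p i P x X \<and> p i P x X \<le> 1) \<and>
        (\<forall>i\<in>V. \<forall>P\<in>profiles V A. \<forall>X. X \<subseteq> A \<and> X \<noteq> {} \<longrightarrow> (\<Sum>x\<in>X. p i P x X) = 1) \<and>
        (\<forall>i\<in>V. \<forall>P\<in>profiles V A. \<forall>X. X \<subseteq> A \<and> X \<noteq> {} \<longrightarrow>
            (\<forall>a\<in>X. (a = best (P i) X \<or> a = worst (P i) X) \<longrightarrow> p i P a X > 0)) \<and>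
        (\<forall>i\<in>V. \<forall>P\<in>profiles V A. \<forall>R u. linear_order_on A R \<and> consistent_utility A (P i) u \<longrightarrow>
            (\<Sum>x\<in>F P. p i P x (F P) * u x) \<ge> (\<Sum>x\<in>F (P(i := R)). p i P x (F (P(i := R))) * u x))))"
  unfolding eu_rationalizes_def[symmetric]
  using SPO_SPP_iff_eu_rationalizable[OF assms(2,3)] by simp

end
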